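(* Let $q_1,q_2,q_3,q_4$ be indeterminates of weights $1,2,3,4$ and $S(y)=y^4+q_1y^3+q_2y^2+q_3y+q_4$. Then the differential equation $(h'(x))^2=S(h(x))$ has a unique solution of the form $h=f'/f$ with $f(x)=x+O(x^2)$, i.e. $h(x)=\frac1x+c_1+c_2x+\dots\in\mathbb{Q}[q_1,q_2,q_3,q_4][[x]][x^{-1}]$. This $h$ determines uniquely the power series $Q(x)=x/f(x)=1+a_1x+a_2x^2+\dots\in\mathbb{Q}[q_1,\dots,q_4][[x]]$, and each $a_n$ is a weighted homogeneous polynomial of weight $n$ in $q_1,\dots,q_4$. *)

theory Defs
  imports "HOL-Library.Poly_Mapping" "HOL-Computational_Algebra.Formal_Laurent_Series"
begin

text \<open>Multivariate polynomials over the rationals: a monomial is a finitely supported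
  exponent vector (variable index to exponent), a polynomial is a
  finitely supported map from monomials to rational coefficients, with convolution product.\<close>
type_synonym mpoly = "(nat \<Rightarrow>\<^sub>0 nat) \<Rightarrow>\<^sub>0 rat"

definition qvar :: "nat \<Rightarrow> mpoly" where
  "qvar i = Poly_Mapping.single (Poly_Mapping.single i 1) 1"

definition in_Qq :: "mpoly \<Rightarrow> bool" where
  "in_Qq p \<longleftrightarrow> (\<forall>m \<in> Poly_Mapping.keys p. Poly_Mapping.keys m \<subseteq> {1,2,3,4})"

definition mweight :: "(nat \<Rightarrow>\<^sub>0 nat) \<Rightarrow> nat" where
  "mweight m = (\<Sum>i\<in>{1,2,3,4}. i * Poly_Mapping.lookup m i)"

definition wt_homog :: "nat \<Rightarrow> mpoly \<Rightarrow> bool" where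
  "wt_homog n p \<longleftrightarrow> in_Qq p \<and> (\<forall>m \<in> Poly_Mapping.keys p. mweight m = n)"

definition S_eval :: "mpoly fls \<Rightarrow> mpoly fls" where
  "S_eval y = y ^ 4 + fls_const (qvar 1) * y ^ 3 + fls_const (qvar 2) * y ^ 2
              + fls_const (qvar 3) * y + fls_const (qvar 4)"

text \<open>f(x) = x + O(x^2) and h = f'/f (written as h * f = f', which is equivalent since
  f is x times a unit).\<close>
definition log_deriv_form :: "mpoly fps \<Rightarrow> mpoly fls \<Rightarrow> bool" where
  "log_deriv_form f h \<longleftrightarrow> fps_nth f 0 = 0 \<and> fps_nth f 1 = 1 \<and>
     h * fps_to_fls f = fps_to_fls (fps_deriv f)"

end

theory Submission
  imports Defs
begin

text \<open>Writing \<open>f = X u\<close> with \<open>u(0) = 1\<close>, the condition \<open>h = f'/f\<close> says \<open>h = X\<^sup>-\<^sup>1 + g\<close> with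
  \<open>u' = g u\<close>. Multiplied by \<open>X\<^sup>3\<close>, the equation \<open>(h')\<^sup>2 = S(h)\<close> becomes \<open>(2 n + 4) g\<^sub>n = N(g)\<^sub>n\<close>
  for all \<open>n\<close>, where \<open>N(g)\<^sub>n\<close> only involves \<open>g\<^sub>0, \<dots>, g\<^sub>n\<^sub>-\<^sub>1\<close>: the coefficients of \<open>g\<close>, hence \<open>h\<close>,
  are determined recursively, i.e. \<open>g\<close> is the fixed point of a contraction for the \<open>X\<close>-adic metric.
  The map \<open>N\<close> preserves the grading in which \<open>X\<close> has weight \<open>-1\<close>, so \<open>g\<^sub>n\<close> has weight \<open>n + 1\<close>.
  Finally \<open>Q = 1/u\<close> is the unique solution of \<open>Q' = -g Q\<close>, \<open>Q(0) = 1\<close>, and the recursion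
  \<open>n Q\<^sub>n = -(g Q)\<^sub>n\<^sub>-\<^sub>1\<close> shows in the same way that \<open>Q\<^sub>n\<close> has weight \<open>n\<close>.\<close>

section \<open>Congruences modulo powers of \<open>X\<close>\<close>

lemma dvd_diff_add:
  fixes a b c d :: "'a::comm_ring_1"
  shows "m dvd a - b \<Longrightarrow> m dvd c - d \<Longrightarrow> m dvd (a + c) - (b + d)"
  by (simp add: add_diff_add dvd_add)

lemma dvd_diff_diff:
  fixes a b c d :: "'a::comm_ring_1"
  assumes "m dvd a - b" "m dvd c - d"
  shows "m dvd (a - c) - (b - d)"
proof -
  have "(a - c) - (b - d) = (a - b) - (c - d)"
    by (simp add: algebra_simps)
  with assms show ?thesis
    by (metis dvd_diff)
qed

lemma dvd_diff_mult:
  fixes a b c d :: "'a::comm_ring_1"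
  assumes "m dvd a - b" "m dvd c - d"
  shows "m dvd a * c - b * d"
proof -
  have "a * c - b * d = a * (c - d) + (a - b) * d"
    by (simp add: algebra_simps)
  then show ?thesis
    using assms by simp
qed

lemma dvd_diff_power:
  fixes a b :: "'a::comm_ring_1"
  shows "m dvd a - b \<Longrightarrow> m dvd a ^ k - b ^ k"
  by (induction k) (simp_all add: dvd_diff_mult)

lemma fps_X_power_dvd_iff: "fps_X ^ n dvd (a :: 'a::comm_ring_1 fps) \<longleftrightarrow> (\<forall>i<n. a $ i = 0)"
proof
  assume "fps_X ^ n dvd a"
  then show "\<forall>i<n. a $ i = 0"
    by (auto simp: fps_X_power_mult_nth)
next
  assume "\<forall>i<n. a $ i = 0"
  then have "a = fps_X ^ n * fps_shift n a"
    by (intro fps_ext) (auto simp: fps_X_power_mult_nth)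
  then show "fps_X ^ n dvd a"
    by (metis dvd_triv_left)
qed

lemma fps_X_power_dvd_diff_iff:
  "fps_X ^ n dvd (a :: 'a::comm_ring_1 fps) - b \<longleftrightarrow> (\<forall>i<n. a $ i = b $ i)"
  by (simp add: fps_X_power_dvd_iff)

lemma fps_eq_if_X_power_dvd_diff:
  fixes a b :: "'a::comm_ring_1 fps"
  assumes "\<And>n. fps_X ^ n dvd a - b"
  shows "a = b"
proof (rule fps_ext)
  fix n
  show "a $ n = b $ n"
    using assms[of "Suc n"] unfolding fps_X_power_dvd_diff_iff by simp
qed

lemma fps_X_power_dvd_diff_X_deriv:
  fixes a b :: "'a::comm_ring_1 fps"
  shows "fps_X ^ n dvd a - b \<Longrightarrow> fps_X ^ n dvd fps_X * fps_deriv a - fps_X * fps_deriv b"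
  by (auto simp: fps_X_power_dvd_diff_iff)

text \<open>Equivalently, \<open>T a $ n\<close> depends only on \<open>a $ 0, \<dots>, a $ (n - 1)\<close>.\<close>

definition X_adic_contraction :: "('a::comm_ring_1 fps \<Rightarrow> 'a fps) \<Rightarrow> bool" where
  "X_adic_contraction T \<longleftrightarrow> (\<forall>n a b. fps_X ^ n dvd a - b \<longrightarrow> fps_X ^ Suc n dvd T a - T b)"

lemma X_adic_contraction_fixpoint_unique:
  assumes T: "X_adic_contraction T" and "T a = a" "T b = b"
  shows "a = b"
proof (rule fps_eq_if_X_power_dvd_diff)
  fix n
  show "fps_X ^ n dvd a - b"
  proof (induction n)
    case (Suc n)
    then show ?case
      using T \<open>T a = a\<close> \<open>T b = b\<close> unfolding X_adic_contraction_def by metis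
  qed simp
qed

lemma X_adic_contraction_fixpoint_exists:
  assumes T: "X_adic_contraction T"
  shows "\<exists>a. T a = a"
proof -
  have cauchy: "fps_X ^ k dvd (T ^^ (k + j)) 0 - (T ^^ k) 0" for k j
  proof (induction k)
    case (Suc k)
    then show ?case
      using T unfolding X_adic_contraction_def by simp
  qed simp
  define a where "a = Abs_fps (\<lambda>n. (T ^^ Suc n) 0 $ n)"
  have approx: "fps_X ^ n dvd a - (T ^^ n) 0" for n
    unfolding fps_X_power_dvd_diff_iff
  proof (intro allI impI)
    fix i assume "i < n"
    then show "a $ i = (T ^^ n) 0 $ i"
      using cauchy[of "Suc i" "n - Suc i"] unfolding fps_X_power_dvd_diff_iff by (simp add: a_def)
  qed
  have "fps_X ^ Suc n dvd T a - a" for n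
  proof -
    have "fps_X ^ Suc n dvd T a - (T ^^ Suc n) 0"
      using T approx[of n] unfolding X_adic_contraction_def by simp
    then have "fps_X ^ Suc n dvd (T a - (T ^^ Suc n) 0) - (a - (T ^^ Suc n) 0)"
      using approx[of "Suc n"] by (rule dvd_diff)
    then show ?thesis
      by simp
  qed
  then have "T a = a"
    by (meson fps_eq_if_X_power_dvd_diff dvd_trans le_imp_power_dvd le_SucI order_refl)
  then show ?thesis ..
qed

section \<open>Weighted homogeneity\<close>

definition mpoly_const :: "rat \<Rightarrow> mpoly" where
  "mpoly_const c = Poly_Mapping.single 0 c"

lemma of_nat_eq_mpoly_const: "(of_nat k :: mpoly) = mpoly_const (of_nat k)"
  by (simp add: mpoly_const_def)

lemma mpoly_const_mult: "mpoly_const a * mpoly_const b = mpoly_const (a * b)"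
  by (simp add: mpoly_const_def mult_single)

lemma mpoly_const_inverse_mult_eq_iff:
  assumes "k \<noteq> 0"
  shows "mpoly_const (1 / of_nat k) * p = q \<longleftrightarrow> p = of_nat k * q"
proof -
  have inv: "mpoly_const (1 / of_nat k) * of_nat k = 1"
    unfolding of_nat_eq_mpoly_const mpoly_const_mult using assms by (simp add: mpoly_const_def)
  show ?thesis
  proof
    assume "mpoly_const (1 / of_nat k) * p = q"
    then have "of_nat k * q = (mpoly_const (1 / of_nat k) * of_nat k) * p"
      by (simp add: ac_simps)
    then show "p = of_nat k * q"
      by (simp add: inv)
  next
    assume "p = of_nat k * q"
    then have "mpoly_const (1 / of_nat k) * p = (mpoly_const (1 / of_nat k) * of_nat k) * q"
      by (simp add: ac_simps)
    then show "mpoly_const (1 / of_nat k) * p = q"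
      by (simp add: inv)
  qed
qed

lemma mweight_add: "mweight (a + b) = mweight a + mweight b"
  by (simp add: mweight_def lookup_add algebra_simps)

lemma wt_homog_0: "wt_homog n 0"
  by (simp add: wt_homog_def in_Qq_def)

lemma wt_homog_add: "wt_homog n p \<Longrightarrow> wt_homog n q \<Longrightarrow> wt_homog n (p + q)"
  unfolding wt_homog_def in_Qq_def using keys_add[of p q] by blast

lemma wt_homog_uminus: "wt_homog n p \<Longrightarrow> wt_homog n (- p)"
  by (simp add: wt_homog_def in_Qq_def)

lemma wt_homog_diff: "wt_homog n p \<Longrightarrow> wt_homog n q \<Longrightarrow> wt_homog n (p - q)"
  unfolding diff_conv_add_uminus by (intro wt_homog_add wt_homog_uminus)

lemma wt_homog_sum: "(\<And>x. x \<in> A \<Longrightarrow> wt_homog n (f x)) \<Longrightarrow> wt_homog n (\<Sum>x\<in>A. f x)"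
  by (induction A rule: infinite_finite_induct) (auto intro: wt_homog_add wt_homog_0)

lemma wt_homog_mult:
  assumes "wt_homog m p" "wt_homog n q"
  shows "wt_homog (m + n) (p * q)"
  unfolding wt_homog_def in_Qq_def
proof (intro conjI ballI)
  fix k assume "k \<in> Poly_Mapping.keys (p * q)"
  then obtain k1 k2 where k: "k = k1 + k2" "k1 \<in> Poly_Mapping.keys p" "k2 \<in> Poly_Mapping.keys q"
    using keys_mult[of p q] by blast
  with assms show "Poly_Mapping.keys k \<subseteq> {1, 2, 3, 4}"
    using keys_add[of k1 k2] unfolding wt_homog_def in_Qq_def by blast
  from k assms show "mweight k = m + n"
    unfolding wt_homog_def by (simp add: mweight_add)
qed

lemma wt_homog_mpoly_const: "wt_homog 0 (mpoly_const c)"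
  by (simp add: wt_homog_def in_Qq_def mpoly_const_def mweight_def)

lemma wt_homog_qvar: "i \<in> {1, 2, 3, 4} \<Longrightarrow> wt_homog i (qvar i)"
  by (auto simp: wt_homog_def in_Qq_def qvar_def mweight_def lookup_single when_def)

lemma in_Qq_add: "in_Qq p \<Longrightarrow> in_Qq q \<Longrightarrow> in_Qq (p + q)"
  unfolding in_Qq_def using keys_add[of p q] by blast

text \<open>Homogeneity for the grading in which the series variable has weight -1.\<close>

definition wt_homog_fps :: "nat \<Rightarrow> mpoly fps \<Rightarrow> bool" where
  "wt_homog_fps d a \<longleftrightarrow> (\<forall>n. wt_homog (n + d) (a $ n))"

lemma wt_homog_fps_add: "wt_homog_fps d a \<Longrightarrow> wt_homog_fps d b \<Longrightarrow> wt_homog_fps d (a + b)"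
  by (simp add: wt_homog_fps_def wt_homog_add)

lemma wt_homog_fps_diff: "wt_homog_fps d a \<Longrightarrow> wt_homog_fps d b \<Longrightarrow> wt_homog_fps d (a - b)"
  by (simp add: wt_homog_fps_def wt_homog_diff)

lemma wt_homog_fps_uminus: "wt_homog_fps d a \<Longrightarrow> wt_homog_fps d (- a)"
  by (simp add: wt_homog_fps_def wt_homog_uminus)

lemma wt_homog_fps_mult:
  assumes a: "wt_homog_fps d a" and b: "wt_homog_fps e b"
  shows "wt_homog_fps (d + e) (a * b)"
  unfolding wt_homog_fps_def fps_mult_nth
proof (intro allI wt_homog_sum)
  fix n i :: nat
  assume "i \<in> {0..n}"
  then have weight: "i + d + (n - i + e) = n + (d + e)"
    by simp
  have "wt_homog (i + d + (n - i + e)) (a $ i * b $ (n - i))"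
    using a b unfolding wt_homog_fps_def by (intro wt_homog_mult) simp_all
  then show "wt_homog (n + (d + e)) (a $ i * b $ (n - i))"
    unfolding weight .
qed

lemma wt_homog_fps_fps_const: "wt_homog d c \<Longrightarrow> wt_homog_fps d (fps_const c)"
  by (simp add: wt_homog_fps_def wt_homog_0)

lemma wt_homog_fps_numeral: "wt_homog_fps 0 (numeral k)"
  using wt_homog_fps_fps_const[OF wt_homog_mpoly_const, of "numeral k"]
  by (simp add: numeral_fps_const of_nat_eq_mpoly_const[of "numeral k", simplified])

lemma wt_homog_fps_one: "wt_homog_fps 0 1"
  using wt_homog_fps_numeral[of Num.One] by simp

lemma wt_homog_fps_power: "wt_homog_fps d a \<Longrightarrow> wt_homog_fps (k * d) (a ^ k)"
proof (induction k)
  case (Suc k)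
  then show ?case
    using wt_homog_fps_mult[of d a "k * d" "a ^ k"] by simp
qed (simp add: wt_homog_fps_one)

lemma wt_homog_fps_X_mult:
  assumes "wt_homog_fps (Suc d) a"
  shows "wt_homog_fps d (fps_X * a)"
  unfolding wt_homog_fps_def
proof
  fix n
  show "wt_homog (n + d) ((fps_X * a) $ n)"
    using assms unfolding wt_homog_fps_def by (cases n) (simp_all add: wt_homog_0)
qed

lemma wt_homog_fps_deriv:
  assumes "wt_homog_fps d a"
  shows "wt_homog_fps (Suc d) (fps_deriv a)"
  unfolding wt_homog_fps_def
proof
  fix n
  have "wt_homog (0 + (Suc n + d)) (of_nat (Suc n) * a $ Suc n)"
    using assms[unfolded wt_homog_fps_def, rule_format, of "Suc n"]
    unfolding of_nat_eq_mpoly_const by (intro wt_homog_mult wt_homog_mpoly_const) simp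
  then show "wt_homog (n + Suc d) (fps_deriv a $ n)"
    by simp
qed

lemma wt_homog_fps_X_power_mult:
  "wt_homog_fps (d + k) a \<Longrightarrow> wt_homog_fps d (fps_X ^ k * a)"
proof (induction k arbitrary: d)
  case (Suc k)
  then have "wt_homog_fps (Suc d) (fps_X ^ k * a)"
    by simp
  then show ?case
    by (simp add: wt_homog_fps_X_mult mult.assoc)
qed simp

lemma wt_homog_fps_qvar: "i \<in> {1, 2, 3, 4} \<Longrightarrow> wt_homog_fps i (fps_const (qvar i))"
  by (intro wt_homog_fps_fps_const wt_homog_qvar)

lemma wt_homog_fps_numeral_mult: "wt_homog_fps d a \<Longrightarrow> wt_homog_fps d (numeral k * a)"
  using wt_homog_fps_mult[OF wt_homog_fps_numeral] by fastforce

lemma X_adic_contraction_fixpoint_wt_homog_fps: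
  assumes T: "X_adic_contraction T" and fixed: "T a = a"
    and preserves: "\<And>b. wt_homog_fps d b \<Longrightarrow> wt_homog_fps d (T b)"
  shows "wt_homog_fps d a"
  unfolding wt_homog_fps_def
proof
  fix n
  show "wt_homog (n + d) (a $ n)"
  proof (induction n rule: less_induct)
    case (less n)
    let ?b = "fps_cutoff n a"
    have "wt_homog_fps d ?b"
      using less by (simp add: wt_homog_fps_def wt_homog_0)
    then have "wt_homog (n + d) (T ?b $ n)"
      using preserves unfolding wt_homog_fps_def by blast
    moreover have "fps_X ^ Suc n dvd T a - T ?b"
      using T unfolding X_adic_contraction_def by (simp add: fps_X_power_dvd_diff_iff)
    then have "T ?b $ n = a $ n"
      using fixed unfolding fps_X_power_dvd_diff_iff by simp
    ultimately show ?case
      by simp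
  qed
qed

section \<open>The linear equation \<open>y' = c y\<close>\<close>

definition divide_coeffs :: "(nat \<Rightarrow> nat) \<Rightarrow> mpoly fps \<Rightarrow> mpoly fps" where
  "divide_coeffs w a = Abs_fps (\<lambda>n. mpoly_const (1 / of_nat (w n)) * a $ n)"

lemma divide_coeffs_eq_iff:
  "(\<And>n. w n \<noteq> 0) \<Longrightarrow> divide_coeffs w a = b \<longleftrightarrow> (\<forall>n. a $ n = of_nat (w n) * b $ n)"
  by (simp add: divide_coeffs_def fps_eq_iff mpoly_const_inverse_mult_eq_iff)

lemma fps_X_power_dvd_divide_coeffs_diff:
  "fps_X ^ n dvd a - b \<Longrightarrow> fps_X ^ n dvd divide_coeffs w a - divide_coeffs w b"
  by (simp add: fps_X_power_dvd_diff_iff divide_coeffs_def)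

lemma wt_homog_fps_divide_coeffs: "wt_homog_fps d a \<Longrightarrow> wt_homog_fps d (divide_coeffs w a)"
  unfolding wt_homog_fps_def divide_coeffs_def
  using wt_homog_mult[OF wt_homog_mpoly_const] by fastforce

text \<open>The integral equation \<open>y = 1 + \<integral>c y\<close> of the initial value problem \<open>y' = c y, y(0) = 1\<close>.\<close>

definition linear_ode_step :: "mpoly fps \<Rightarrow> mpoly fps \<Rightarrow> mpoly fps" where
  "linear_ode_step c y = 1 + fps_X * divide_coeffs Suc (c * y)"

lemma linear_ode_step_fixpoint_iff:
  "linear_ode_step c y = y \<longleftrightarrow> y $ 0 = 1 \<and> fps_deriv y = c * y"
proof -
  have "linear_ode_step c y = y \<longleftrightarrow> y $ 0 = 1 \<and> divide_coeffs Suc (c * y) = fps_shift 1 y"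
  proof
    assume "linear_ode_step c y = y"
    then have y: "y = 1 + fps_X * divide_coeffs Suc (c * y)"
      by (simp add: linear_ode_step_def)
    have "y $ 0 = 1"
      by (subst y) simp
    moreover have "fps_shift 1 y = divide_coeffs Suc (c * y)"
      by (subst (1) y) (simp add: fps_eq_iff)
    ultimately show "y $ 0 = 1 \<and> divide_coeffs Suc (c * y) = fps_shift 1 y"
      by simp
  next
    assume "y $ 0 = 1 \<and> divide_coeffs Suc (c * y) = fps_shift 1 y"
    then show "linear_ode_step c y = y"
      unfolding linear_ode_step_def by (auto simp: fps_eq_iff)
  qed
  also have "\<dots> \<longleftrightarrow> y $ 0 = 1 \<and> fps_deriv y = c * y"
    by (subst divide_coeffs_eq_iff) (auto simp: fps_eq_iff)
  finally show ?thesis .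
qed

lemma X_adic_contraction_linear_ode_step: "X_adic_contraction (linear_ode_step c)"
  unfolding X_adic_contraction_def linear_ode_step_def
proof (intro allI impI)
  fix n and a b :: "mpoly fps"
  assume "fps_X ^ n dvd a - b"
  then have "fps_X ^ n dvd divide_coeffs Suc (c * a) - divide_coeffs Suc (c * b)"
    by (intro fps_X_power_dvd_divide_coeffs_diff dvd_diff_mult dvd_refl) simp
  then have "fps_X * fps_X ^ n dvd fps_X * (divide_coeffs Suc (c * a) - divide_coeffs Suc (c * b))"
    by (rule mult_dvd_mono[OF dvd_refl])
  then show "fps_X ^ Suc n dvd 1 + fps_X * divide_coeffs Suc (c * a)
      - (1 + fps_X * divide_coeffs Suc (c * b))"
    by (simp add: right_diff_distrib)
qed

lemma linear_ode_unique_solution: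
  fixes c :: "mpoly fps"
  shows "\<exists>!y. y $ 0 = 1 \<and> fps_deriv y = c * y"
proof -
  have contr: "X_adic_contraction (linear_ode_step c)"
    by (rule X_adic_contraction_linear_ode_step)
  then obtain y where "linear_ode_step c y = y"
    using X_adic_contraction_fixpoint_exists by blast
  with contr show ?thesis
    unfolding linear_ode_step_fixpoint_iff[symmetric] by (blast intro: X_adic_contraction_fixpoint_unique)
qed

lemma linear_ode_solution_wt_homog_fps:
  assumes "wt_homog_fps 1 c" "y $ 0 = 1" "fps_deriv y = c * y"
  shows "wt_homog_fps 0 y"
proof (rule X_adic_contraction_fixpoint_wt_homog_fps)
  show "X_adic_contraction (linear_ode_step c)"
    by (rule X_adic_contraction_linear_ode_step)
  show "linear_ode_step c y = y"
    using assms by (simp add: linear_ode_step_fixpoint_iff)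
  fix b
  assume "wt_homog_fps 0 b"
  then have "wt_homog_fps 1 (c * b)"
    using wt_homog_fps_mult[OF assms(1)] by fastforce
  then show "wt_homog_fps 0 (linear_ode_step c b)"
    unfolding linear_ode_step_def
    by (intro wt_homog_fps_add wt_homog_fps_one wt_homog_fps_X_mult wt_homog_fps_divide_coeffs) simp
qed

section \<open>The quartic equation\<close>

text \<open>For \<open>h = X\<^sup>-\<^sup>1 + g\<close>, multiplying \<open>(h')\<^sup>2 = S(h)\<close> by \<open>X\<^sup>3\<close> gives
  \<open>quartic_nonlinearity g = 4 g + 2 X g'\<close> (lemma \<open>S_eval_X_inv_plus_identity\<close>), whose right-hand
  side has \<open>n\<close>-th coefficient \<open>(2 n + 4) g\<^sub>n\<close>.\<close>

definition quartic_nonlinearity_core :: "mpoly fps \<Rightarrow> mpoly fps" where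
  "quartic_nonlinearity_core g =
     (fps_X * fps_deriv g) ^ 2 - 6 * g ^ 2 - fps_X * (4 * g ^ 3) - fps_X ^ 2 * g ^ 4
     - fps_const (qvar 2) * (1 + fps_X * g) ^ 2 - fps_X * (fps_const (qvar 3) * (1 + fps_X * g))
     - fps_X ^ 2 * fps_const (qvar 4)"

definition quartic_nonlinearity :: "mpoly fps \<Rightarrow> mpoly fps" where
  "quartic_nonlinearity g =
     fps_X * quartic_nonlinearity_core g - fps_const (qvar 1) * (1 + fps_X * g) ^ 3"

lemma quartic_nonlinearity_contraction:
  assumes "fps_X ^ n dvd a - b"
  shows "fps_X ^ Suc n dvd quartic_nonlinearity a - quartic_nonlinearity b"
proof -
  have deriv: "fps_X ^ n dvd fps_X * fps_deriv a - fps_X * fps_deriv b"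
    using assms by (rule fps_X_power_dvd_diff_X_deriv)
  have "fps_X ^ n dvd quartic_nonlinearity_core a - quartic_nonlinearity_core b"
    unfolding quartic_nonlinearity_core_def
    by (intro deriv assms dvd_diff_diff dvd_diff_mult dvd_diff_power dvd_diff_add) simp_all
  then have core: "fps_X ^ Suc n dvd
      fps_X * quartic_nonlinearity_core a - fps_X * quartic_nonlinearity_core b"
    by (simp add: mult_dvd_mono flip: right_diff_distrib)
  have "fps_X ^ Suc n dvd (1 + fps_X * a) - (1 + fps_X * b)"
    using assms by (simp add: mult_dvd_mono flip: right_diff_distrib)
  then have "fps_X ^ Suc n dvd fps_const (qvar 1) * (1 + fps_X * a) ^ 3
      - fps_const (qvar 1) * (1 + fps_X * b) ^ 3"
    by (intro dvd_diff_mult dvd_diff_power) simp_all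
  with core show ?thesis
    unfolding quartic_nonlinearity_def by (rule dvd_diff_diff)
qed

lemma wt_homog_fps_quartic_nonlinearity:
  assumes g: "wt_homog_fps 1 g"
  shows "wt_homog_fps 1 (quartic_nonlinearity g)"
proof -
  have Xg': "wt_homog_fps 1 (fps_X * fps_deriv g)"
    using g by (intro wt_homog_fps_X_mult wt_homog_fps_deriv)
  have u: "wt_homog_fps 0 (1 + fps_X * g)"
    using g by (intro wt_homog_fps_add wt_homog_fps_one wt_homog_fps_X_mult) simp
  have "wt_homog_fps 2 ((fps_X * fps_deriv g) ^ 2)"
    using wt_homog_fps_power[OF Xg', of 2] by simp
  moreover have "wt_homog_fps 2 (6 * g ^ 2)"
    using wt_homog_fps_power[OF g, of 2] by (intro wt_homog_fps_numeral_mult) simp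
  moreover have "wt_homog_fps 2 (fps_X * (4 * g ^ 3))"
    using wt_homog_fps_power[OF g, of 3] by (intro wt_homog_fps_X_mult wt_homog_fps_numeral_mult) simp
  moreover have "wt_homog_fps 2 (fps_X ^ 2 * g ^ 4)"
    using wt_homog_fps_power[OF g, of 4] by (intro wt_homog_fps_X_power_mult) simp
  moreover have "wt_homog_fps 2 (fps_const (qvar 2) * (1 + fps_X * g) ^ 2)"
    using wt_homog_fps_mult[OF wt_homog_fps_qvar wt_homog_fps_power[OF u, of 2], of 2] by simp
  moreover have "wt_homog_fps 2 (fps_X * (fps_const (qvar 3) * (1 + fps_X * g)))"
    using wt_homog_fps_mult[OF wt_homog_fps_qvar u, of 3] by (intro wt_homog_fps_X_mult) simp
  moreover have "wt_homog_fps 2 (fps_X ^ 2 * fps_const (qvar 4))"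
    using wt_homog_fps_qvar[of 4] by (intro wt_homog_fps_X_power_mult) simp
  ultimately have "wt_homog_fps 2 (quartic_nonlinearity_core g)"
    unfolding quartic_nonlinearity_core_def by (intro wt_homog_fps_diff)
  then have "wt_homog_fps 1 (fps_X * quartic_nonlinearity_core g)"
    by (intro wt_homog_fps_X_mult) (simp add: numeral_2_eq_2)
  moreover have "wt_homog_fps 1 (fps_const (qvar 1) * (1 + fps_X * g) ^ 3)"
    using wt_homog_fps_mult[OF wt_homog_fps_qvar wt_homog_fps_power[OF u, of 3], of 1] by simp
  ultimately show ?thesis
    unfolding quartic_nonlinearity_def by (rule wt_homog_fps_diff)
qed

definition quartic_step :: "mpoly fps \<Rightarrow> mpoly fps" where
  "quartic_step g = divide_coeffs (\<lambda>n. 2 * n + 4) (quartic_nonlinearity g)"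

lemma X_adic_contraction_quartic_step: "X_adic_contraction quartic_step"
  unfolding X_adic_contraction_def quartic_step_def
  by (blast intro: fps_X_power_dvd_divide_coeffs_diff quartic_nonlinearity_contraction)

lemma wt_homog_fps_quartic_step: "wt_homog_fps 1 g \<Longrightarrow> wt_homog_fps 1 (quartic_step g)"
  unfolding quartic_step_def
  by (intro wt_homog_fps_divide_coeffs wt_homog_fps_quartic_nonlinearity)

lemma fls_X_mult_fls_X_inv: "fls_X * fls_X_inv = (1 :: 'a::comm_ring_1 fls)"
  by (simp add: fls_X_times_conv_shift)

lemma S_eval_X_inv_plus_identity:
  fixes g :: "mpoly fps"
  shows "(fls_deriv (fls_X_inv + fps_to_fls g)) ^ 2 - S_eval (fls_X_inv + fps_to_fls g) =
    fls_X_inv ^ 3 * fps_to_fls (quartic_nonlinearity g - (4 * g + 2 * (fps_X * fps_deriv g)))"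
proof -
  have deriv: "fls_deriv (fls_X_inv + fps_to_fls g) = - (fls_X_inv ^ 2) + fps_to_fls (fps_deriv g)"
    by (simp add: fls_deriv_fps_to_fls)
  show ?thesis
    unfolding deriv S_eval_def quartic_nonlinearity_def quartic_nonlinearity_core_def
    using fls_X_mult_fls_X_inv[where 'a = mpoly]
    by (simp add: fls_times_fps_to_fls fps_to_fls_power) algebra
qed

lemma fps_nth_linear_part:
  "(4 * g + 2 * (fps_X * fps_deriv g)) $ n = of_nat (2 * n + 4) * (g $ n :: mpoly)"
  by (cases n) (auto simp: numeral_fps_const algebra_simps)

lemma S_ode_iff_quartic_step_fixpoint:
  fixes g :: "mpoly fps"
  shows "(fls_deriv (fls_X_inv + fps_to_fls g)) ^ 2 = S_eval (fls_X_inv + fps_to_fls g)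
    \<longleftrightarrow> quartic_step g = g"
proof -
  have "(fls_deriv (fls_X_inv + fps_to_fls g)) ^ 2 = S_eval (fls_X_inv + fps_to_fls g)
      \<longleftrightarrow> (fls_deriv (fls_X_inv + fps_to_fls g)) ^ 2 - S_eval (fls_X_inv + fps_to_fls g) = 0"
    by simp
  also have "\<dots> \<longleftrightarrow> quartic_nonlinearity g - (4 * g + 2 * (fps_X * fps_deriv g)) = 0"
    unfolding S_eval_X_inv_plus_identity by (simp del: fps_to_fls_minus fps_to_fls_plus)
  also have "\<dots> \<longleftrightarrow> quartic_nonlinearity g = 4 * g + 2 * (fps_X * fps_deriv g)"
    by simp
  also have "\<dots> \<longleftrightarrow> (\<forall>n. quartic_nonlinearity g $ n = of_nat (2 * n + 4) * g $ n)"
    by (simp only: fps_eq_iff fps_nth_linear_part)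
  also have "\<dots> \<longleftrightarrow> quartic_step g = g"
    unfolding quartic_step_def by (subst divide_coeffs_eq_iff) simp_all
  finally show ?thesis .
qed

section \<open>Logarithmic derivatives\<close>

lemma log_deriv_form_X_mult_iff:
  fixes g u :: "mpoly fps"
  shows "log_deriv_form (fps_X * u) (fls_X_inv + fps_to_fls g) \<longleftrightarrow>
    u $ 0 = 1 \<and> fps_deriv u = g * u"
proof -
  have "(fls_X_inv + fps_to_fls g) * fps_to_fls (fps_X * u) =
      fps_to_fls u + fls_X * fps_to_fls (g * u)"
    using fls_X_mult_fls_X_inv[where 'a = mpoly]
    by (simp add: fls_times_fps_to_fls) algebra
  moreover have "fps_to_fls (fps_deriv (fps_X * u)) = fps_to_fls u + fls_X * fps_to_fls (fps_deriv u)"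
    by (simp add: fls_times_fps_to_fls algebra_simps)
  ultimately have "(fls_X_inv + fps_to_fls g) * fps_to_fls (fps_X * u) =
      fps_to_fls (fps_deriv (fps_X * u)) \<longleftrightarrow> fps_deriv u = g * u"
    by auto
  then show ?thesis
    unfolding log_deriv_form_def by simp
qed

lemma log_deriv_form_decompose:
  fixes f :: "mpoly fps"
  assumes "log_deriv_form f h"
  shows "\<exists>g u. h = fls_X_inv + fps_to_fls g \<and> f = fps_X * u"
proof -
  define u where "u = fps_shift 1 f"
  have f: "f = fps_X * u"
  proof (rule fps_ext)
    fix n
    show "f $ n = (fps_X * u) $ n"
      using assms by (cases n) (simp_all add: log_deriv_form_def u_def)
  qed
  define v where "v = fps_right_inverse u 1"
  have "u * v = 1"
    using assms fps_right_inverse[of u 1] by (simp add: log_deriv_form_def u_def v_def)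
  then have uv: "fps_to_fls u * fps_to_fls v = 1"
    by (simp flip: fls_times_fps_to_fls)
  have "h * (fls_X * fps_to_fls u) = fps_to_fls u + fls_X * fps_to_fls (fps_deriv u)"
    using assms unfolding log_deriv_form_def f by (simp add: fls_times_fps_to_fls algebra_simps)
  then have "h = fls_X_inv + fps_to_fls (fps_deriv u * v)"
    using uv fls_X_mult_fls_X_inv[where 'a = mpoly] unfolding fls_times_fps_to_fls by algebra
  with f show ?thesis
    by blast
qed

lemma S_ode_solution_iff:
  "(\<exists>f. log_deriv_form f h) \<and> (fls_deriv h) ^ 2 = S_eval h \<longleftrightarrow>
    (\<exists>g. h = fls_X_inv + fps_to_fls g \<and> quartic_step g = g)"
proof
  assume "(\<exists>f. log_deriv_form f h) \<and> (fls_deriv h) ^ 2 = S_eval h"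
  then show "\<exists>g. h = fls_X_inv + fps_to_fls g \<and> quartic_step g = g"
    using log_deriv_form_decompose S_ode_iff_quartic_step_fixpoint by metis
next
  assume "\<exists>g. h = fls_X_inv + fps_to_fls g \<and> quartic_step g = g"
  then obtain g where h: "h = fls_X_inv + fps_to_fls g" and "quartic_step g = g"
    by blast
  moreover obtain u where "u $ 0 = 1" "fps_deriv u = g * u"
    using linear_ode_unique_solution[of g] by blast
  ultimately show "(\<exists>f. log_deriv_form f h) \<and> (fls_deriv h) ^ 2 = S_eval h"
    using log_deriv_form_X_mult_iff S_ode_iff_quartic_step_fixpoint by blast
qed

lemma log_deriv_form_reciprocal_exists:
  assumes "log_deriv_form f h"
  shows "\<exists>Q. Q * f = fps_X"
proof -
  obtain g u where "h = fls_X_inv + fps_to_fls g" and f: "f = fps_X * u"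
    using log_deriv_form_decompose[OF assms] by blast
  then have "u $ 0 = 1"
    using assms log_deriv_form_X_mult_iff by blast
  then have "fps_right_inverse u 1 * f = fps_X"
    using fps_right_inverse[of u 1] unfolding f by (simp add: ac_simps)
  then show ?thesis ..
qed

lemma log_deriv_form_reciprocal_ode:
  assumes "log_deriv_form f (fls_X_inv + fps_to_fls g)" and Q: "Q * f = fps_X"
  shows "Q $ 0 = 1 \<and> fps_deriv Q = - g * Q"
proof -
  obtain u where f: "f = fps_X * u"
    using log_deriv_form_decompose[OF assms(1)] by blast
  then have u: "u $ 0 = 1" "fps_deriv u = g * u"
    using assms(1) log_deriv_form_X_mult_iff by auto
  have "fps_X * (Q * u) = fps_X * 1"
    using Q unfolding f by (simp add: ac_simps)
  then have Qu: "Q * u = 1"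
    by simp
  then have "(Q * u) $ 0 = 1"
    by simp
  then have "Q $ 0 = 1"
    using u by simp
  moreover have "fps_deriv Q * u + Q * (g * u) = 0"
    using arg_cong[OF Qu, of fps_deriv] u by (simp add: algebra_simps)
  then have "fps_deriv Q = - g * Q"
    using Qu by algebra
  ultimately show ?thesis ..
qed

lemma in_Qq_fls_nth_X_inv_plus:
  assumes "wt_homog_fps d g"
  shows "in_Qq (fls_nth (fls_X_inv + fps_to_fls g) n)"
proof -
  have "in_Qq (g $ k)" for k
    using assms by (auto simp: wt_homog_fps_def wt_homog_def)
  moreover have "in_Qq 0" "in_Qq 1"
    by (simp_all add: in_Qq_def)
  ultimately show ?thesis
    by (auto intro!: in_Qq_add)
qed

theorem lemma2p2p1:
  shows "(\<exists>!h :: mpoly fls. (\<exists>f. log_deriv_form f h) \<and> (fls_deriv h) ^ 2 = S_eval h)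
    \<and> (\<forall>h :: mpoly fls. (\<exists>f. log_deriv_form f h) \<and> (fls_deriv h) ^ 2 = S_eval h \<longrightarrow>
          (\<forall>n. in_Qq (fls_nth h n))
        \<and> (\<exists>!Q :: mpoly fps. \<exists>f. log_deriv_form f h \<and> Q * f = fps_X)
        \<and> (\<forall>Q f. log_deriv_form f h \<and> Q * f = fps_X \<longrightarrow>
              fps_nth Q 0 = 1 \<and> (\<forall>n. wt_homog n (fps_nth Q n))))"
proof -
  obtain g where g: "quartic_step g = g"
    using X_adic_contraction_fixpoint_exists[OF X_adic_contraction_quartic_step] by blast
  then have solution_iff: "(\<exists>f. log_deriv_form f h) \<and> (fls_deriv h) ^ 2 = S_eval h \<longleftrightarrow>
      h = fls_X_inv + fps_to_fls g" for h
    using S_ode_solution_iff X_adic_contraction_fixpoint_unique[OF X_adic_contraction_quartic_step]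
    by blast
  have g_wt: "wt_homog_fps 1 g"
    using X_adic_contraction_quartic_step g wt_homog_fps_quartic_step
    by (rule X_adic_contraction_fixpoint_wt_homog_fps)
  have Q_ode: "Q $ 0 = 1 \<and> fps_deriv Q = - g * Q"
    if "log_deriv_form f (fls_X_inv + fps_to_fls g) \<and> Q * f = fps_X" for Q f
    using that log_deriv_form_reciprocal_ode by blast
  have "wt_homog_fps 0 Q" if "Q $ 0 = 1 \<and> fps_deriv Q = - g * Q" for Q
    using that g_wt wt_homog_fps_uminus linear_ode_solution_wt_homog_fps by fastforce
  then have Q_wt: "wt_homog n (Q $ n)" if "Q $ 0 = 1 \<and> fps_deriv Q = - g * Q" for Q n
    using that unfolding wt_homog_fps_def by simp
  obtain f where "log_deriv_form f (fls_X_inv + fps_to_fls g)"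
    using solution_iff by blast
  then have "\<exists>!Q. \<exists>f. log_deriv_form f (fls_X_inv + fps_to_fls g) \<and> Q * f = fps_X"
    using log_deriv_form_reciprocal_exists Q_ode linear_ode_unique_solution[of "- g"] by blast
  then show ?thesis
    using solution_iff in_Qq_fls_nth_X_inv_plus[OF g_wt] Q_ode Q_wt by auto
qed

end
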